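(* Let $\Xi:M_l\to M_l$ be the pinching map $\Xi((m_{ij}))=(\delta_{ij}m_{ij})$ and let $\Psi:M_N\to M_k$ be any quantum channel, with $K_\Psi=\Psi(D_N)$. Then the image $K_{\Xi\otimes\Psi}=(\Xi\otimes\Psi)(D_{lN})\subset M_l\otimes M_k$ is $$K_{\Xi\otimes\Psi}=\{a_1B_1\oplus\dots\oplus a_lB_l:\ (a_i)\in\Delta_l,\ B_1,\dots,B_l\in K_\Psi\},$$ where $\oplus$ denotes the block-diagonal matrix in $M_l\otimes M_k\cong M_l(M_k)$.
   Context: $\Delta_l$ is the probability simplex $\{(a_1,\dots,a_l):a_i\ge0,\sum a_i=1\}$; $D_d$ is the set of $d\times d$ density matrices. *)

theory Defs
  imports "Jordan_Normal_Form.Matrix" "HOL-Library.Complex_Order"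
begin

text \<open>Tensor products M_a (x) M_b are identified with M_(a*b) via the index
  (i,x) |-> i*b + x (so M_a (x) M_b = M_a(M_b), block matrices).\<close>

definition psd :: "nat \<Rightarrow> complex mat \<Rightarrow> bool" where
  "psd n A \<longleftrightarrow> A \<in> carrier_mat n n \<and>
     (\<forall>v :: nat \<Rightarrow> complex. (\<Sum>i<n. \<Sum>j<n. cnj (v i) * A $$ (i,j) * v j) \<ge> 0)"

definition mtrace :: "complex mat \<Rightarrow> complex" where
  "mtrace A = (\<Sum>i<dim_row A. A $$ (i,i))"

definition density_mats :: "nat \<Rightarrow> complex mat set" where
  "density_mats n = {A. psd n A \<and> mtrace A = 1}"

definition simplex :: "nat \<Rightarrow> (nat \<Rightarrow> real) set" where
  "simplex l = {a. (\<forall>i<l. a i \<ge> 0) \<and> (\<Sum>i<l. a i) = 1}"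

definition munit :: "nat \<Rightarrow> nat \<Rightarrow> nat \<Rightarrow> complex mat" where
  "munit n i j = mat n n (\<lambda>(r,c). if r = i \<and> c = j then 1 else 0)"

definition block :: "nat \<Rightarrow> complex mat \<Rightarrow> nat \<Rightarrow> nat \<Rightarrow> complex mat" where
  "block n X i j = mat n n (\<lambda>(r,c). X $$ (i*n + r, j*n + c))"

text \<open>Tensor product of linear maps Phi : M_m -> M_p and Psi : M_n -> M_q,
  acting on M_m (x) M_n = M_(m*n), with values in M_p (x) M_q = M_(p*q):
  (Phi (x) Psi)(X) = sum_ij Phi(E_ij) (x) Psi(X_ij)  (Kronecker products, written entrywise).\<close>
definition tensor_map :: "nat \<Rightarrow> nat \<Rightarrow> nat \<Rightarrow> nat \<Rightarrow> (complex mat \<Rightarrow> complex mat) \<Rightarrow>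
    (complex mat \<Rightarrow> complex mat) \<Rightarrow> complex mat \<Rightarrow> complex mat" where
  "tensor_map m p n q Phi Psi X = mat (p*q) (p*q) (\<lambda>(r,c).
     \<Sum>i<m. \<Sum>j<m. Phi (munit m i j) $$ (r div q, c div q) * Psi (block n X i j) $$ (r mod q, c mod q))"

definition id_map :: "complex mat \<Rightarrow> complex mat" where
  "id_map X = X"

definition linear_mat_map :: "nat \<Rightarrow> nat \<Rightarrow> (complex mat \<Rightarrow> complex mat) \<Rightarrow> bool" where
  "linear_mat_map n k Psi \<longleftrightarrow>
     (\<forall>X \<in> carrier_mat n n. Psi X \<in> carrier_mat k k) \<and>
     (\<forall>X \<in> carrier_mat n n. \<forall>Y \<in> carrier_mat n n. Psi (X + Y) = Psi X + Psi Y) \<and>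
     (\<forall>X \<in> carrier_mat n n. \<forall>c. Psi (c \<cdot>\<^sub>m X) = c \<cdot>\<^sub>m Psi X)"

definition quantum_channel :: "nat \<Rightarrow> nat \<Rightarrow> (complex mat \<Rightarrow> complex mat) \<Rightarrow> bool" where
  "quantum_channel n k Psi \<longleftrightarrow> linear_mat_map n k Psi \<and>
     (\<forall>m. \<forall>X. psd (m*n) X \<longrightarrow> psd (m*k) (tensor_map m m n k id_map Psi X)) \<and>
     (\<forall>X \<in> carrier_mat n n. mtrace (Psi X) = mtrace X)"

definition pinching :: "nat \<Rightarrow> complex mat \<Rightarrow> complex mat" where
  "pinching l M = mat l l (\<lambda>(i,j). if i = j then M $$ (i,j) else 0)"

definition block_diag :: "nat \<Rightarrow> nat \<Rightarrow> (nat \<Rightarrow> complex mat) \<Rightarrow> complex mat" where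
  "block_diag l k C = mat (l*k) (l*k)
     (\<lambda>(r,c). if r div k = c div k then C (r div k) $$ (r mod k, c mod k) else 0)"

end

theory Submission
  imports Defs
begin

text \<open>The pinching kills the off-diagonal blocks, so \<open>(\<Xi> \<otimes> \<Psi>)(X)\<close> is the block-diagonal
  matrix of the \<open>\<Psi>(X\<^sub>i\<^sub>i)\<close>. The diagonal blocks of a density matrix are positive
  semidefinite with traces \<open>a\<^sub>i\<close> forming a probability vector, hence \<open>X\<^sub>i\<^sub>i = a\<^sub>i Y\<^sub>i\<close> with
  density matrices \<open>Y\<^sub>i\<close> (a positive semidefinite block of trace 0 vanishes). Conversely
  \<open>a\<^sub>1 Y\<^sub>1 \<oplus> \<dots> \<oplus> a\<^sub>l Y\<^sub>l\<close> is a density matrix with these diagonal blocks, and linearity of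
  \<open>\<Psi>\<close> turns \<open>\<Psi>(a\<^sub>i Y\<^sub>i)\<close> into \<open>a\<^sub>i \<Psi>(Y\<^sub>i)\<close>.\<close>

lemma sum_lessThan_mult_blocks:
  fixes f :: "nat \<Rightarrow> 'a::comm_monoid_add"
  shows "(\<Sum>p<l*n. f p) = (\<Sum>i<l. \<Sum>r<n. f (i*n + r))"
proof -
  have "(\<Sum>p<l*n. f p) = (\<Sum>i<l. \<Sum>p\<in>{i*n..<i*n+n}. f p)"
    by (rule sum.nat_group[symmetric])
  then show ?thesis
    by (simp add: sum.atLeastLessThan_shift_0 atLeast0LessThan)
qed

lemma quadratic_form_supported:
  assumes "S \<subseteq> {..<n}" and "\<And>p. p \<notin> S \<Longrightarrow> v p = 0"
  shows "(\<Sum>p<n. \<Sum>q<n. cnj (v p) * A $$ (p,q) * v q) =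
    (\<Sum>p\<in>S. \<Sum>q\<in>S. cnj (v p) * A $$ (p,q) * v q)"
proof -
  have "(\<Sum>p<n. \<Sum>q<n. cnj (v p) * A $$ (p,q) * v q) =
      (\<Sum>p\<in>S. \<Sum>q<n. cnj (v p) * A $$ (p,q) * v q)"
    using assms by (intro sum.mono_neutral_right) auto
  also have "\<dots> = (\<Sum>p\<in>S. \<Sum>q\<in>S. cnj (v p) * A $$ (p,q) * v q)"
    using assms by (intro sum.cong refl sum.mono_neutral_right) auto
  finally show ?thesis .
qed

lemma psd_carrier: "psd n A \<Longrightarrow> A \<in> carrier_mat n n"
  by (simp add: psd_def)

lemma density_mats_carrier: "A \<in> density_mats n \<Longrightarrow> A \<in> carrier_mat n n"
  by (simp add: density_mats_def psd_carrier)

lemma psd_quadratic_form_nonneg: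
  "psd n A \<Longrightarrow> (\<Sum>i<n. \<Sum>j<n. cnj (v i) * A $$ (i,j) * v j) \<ge> 0"
  by (simp add: psd_def)

lemma psd_diag_nonneg:
  assumes "psd n A" and "i < n"
  shows "A $$ (i,i) \<ge> 0"
proof -
  let ?v = "\<lambda>p. if p = i then 1 else (0::complex)"
  have "(\<Sum>p<n. \<Sum>q<n. cnj (?v p) * A $$ (p,q) * ?v q) = A $$ (i,i)"
    using assms(2) by (subst quadratic_form_supported[of "{i}"]) auto
  then show ?thesis
    using psd_quadratic_form_nonneg[OF assms(1), of ?v] by simp
qed

lemma psd_offdiag_eq_0:
  assumes A: "psd n A" and "i < n" "j < n" and "A $$ (i,i) = 0" "A $$ (j,j) = 0"
  shows "A $$ (i,j) = 0"
proof (cases "i = j")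
  case True
  then show ?thesis using assms by simp
next
  case False
  have form: "0 \<le> cnj s * A $$ (i,j) + A $$ (j,i) * s" for s
  proof -
    let ?v = "\<lambda>p. if p = i then s else if p = j then 1 else (0::complex)"
    have "(\<Sum>p<n. \<Sum>q<n. cnj (?v p) * A $$ (p,q) * ?v q) = cnj s * A $$ (i,j) + A $$ (j,i) * s"
      using assms False by (subst quadratic_form_supported[of "{i,j}"]) auto
    then show ?thesis
      using psd_quadratic_form_nonneg[OF A, of ?v] by simp
  qed
  \<comment> \<open>Testing the quadratic form with s = 1, -1, i, -i forces both
    A(i,j) + A(j,i) and A(i,j) - A(j,i) to vanish.\<close>
  have "A $$ (i,j) + A $$ (j,i) = 0"
    using form[of 1] form[of "-1"] by (simp add: less_eq_complex_def complex_eq_iff)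
  moreover have "A $$ (i,j) - A $$ (j,i) = 0"
    using form[of \<i>] form[of "-\<i>"] by (simp add: less_eq_complex_def complex_eq_iff algebra_simps)
  ultimately show ?thesis by (simp add: algebra_simps)
qed

lemma psd_eq_0_if_mtrace_eq_0:
  assumes A: "psd n A" and "mtrace A = 0"
  shows "A = 0\<^sub>m n n"
proof -
  have dim: "A \<in> carrier_mat n n" using psd_carrier[OF A] .
  have diag: "A $$ (r,r) = 0" if "r < n" for r
    using assms dim that psd_diag_nonneg[OF A] sum_nonneg_eq_0_iff[of "{..<n}" "\<lambda>r. A $$ (r,r)"]
    by (auto simp: mtrace_def)
  show ?thesis
    using dim by (intro eq_matI) (auto simp: diag psd_offdiag_eq_0[OF A])
qed

lemma psd_smult:
  assumes "psd n A" and "c \<ge> 0"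
  shows "psd n (c \<cdot>\<^sub>m A)"
  unfolding psd_def
proof (intro conjI allI)
  have dim: "A \<in> carrier_mat n n" using psd_carrier[OF assms(1)] .
  then show "c \<cdot>\<^sub>m A \<in> carrier_mat n n" by simp
  fix v :: "nat \<Rightarrow> complex"
  have "(\<Sum>i<n. \<Sum>j<n. cnj (v i) * (c \<cdot>\<^sub>m A) $$ (i,j) * v j) =
      c * (\<Sum>i<n. \<Sum>j<n. cnj (v i) * A $$ (i,j) * v j)"
    using dim by (simp add: sum_distrib_left algebra_simps)
  also have "\<dots> \<ge> 0"
    using assms by (intro mult_nonneg_nonneg psd_quadratic_form_nonneg)
  finally show "0 \<le> (\<Sum>i<n. \<Sum>j<n. cnj (v i) * (c \<cdot>\<^sub>m A) $$ (i,j) * v j)" .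
qed

lemma mtrace_smult: "A \<in> carrier_mat n n \<Longrightarrow> mtrace (c \<cdot>\<^sub>m A) = c * mtrace A"
  by (simp add: mtrace_def sum_distrib_left)

lemma block_carrier [simp]: "block n X i j \<in> carrier_mat n n"
  by (simp add: block_def)

lemma mtrace_eq_sum_mtrace_blocks:
  "X \<in> carrier_mat (l*n) (l*n) \<Longrightarrow> mtrace X = (\<Sum>i<l. mtrace (block n X i i))"
  by (simp add: mtrace_def block_def sum_lessThan_mult_blocks)

lemma psd_block:
  assumes X: "psd (l*n) X" and "i < l"
  shows "psd n (block n X i i)"
  unfolding psd_def
proof (intro conjI allI)
  show "block n X i i \<in> carrier_mat n n" by simp
  fix v :: "nat \<Rightarrow> complex"
  define w where "w p = (if p \<in> {i*n..<i*n+n} then v (p - i*n) else 0)" for p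
  have "i*n + n \<le> l*n"
    using \<open>i < l\<close> mult_le_mono1[of "Suc i" l n] by simp
  then have "(\<Sum>p<l*n. \<Sum>q<l*n. cnj (w p) * X $$ (p,q) * w q) =
      (\<Sum>p\<in>{i*n..<i*n+n}. \<Sum>q\<in>{i*n..<i*n+n}. cnj (w p) * X $$ (p,q) * w q)"
    by (intro quadratic_form_supported) (auto simp: w_def)
  also have "\<dots> = (\<Sum>r<n. \<Sum>c<n. cnj (v r) * block n X i i $$ (r,c) * v c)"
    by (simp add: sum.atLeastLessThan_shift_0 atLeast0LessThan w_def block_def)
  finally show "0 \<le> (\<Sum>r<n. \<Sum>c<n. cnj (v r) * block n X i i $$ (r,c) * v c)"
    using psd_quadratic_form_nonneg[OF X, of w] by simp
qed

lemma block_diag_index: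
  assumes "i < l" "j < l" "r < n" "c < n"
  shows "block_diag l n C $$ (i*n + r, j*n + c) = (if i = j then C i $$ (r,c) else 0)"
proof -
  have "i*n + r < l*n" "j*n + c < l*n"
    using assms mult_le_mono1[of "Suc i" l n] mult_le_mono1[of "Suc j" l n] by simp_all
  then show ?thesis
    using assms by (simp add: block_diag_def)
qed

lemma block_diag_cong:
  assumes "\<And>i. i < l \<Longrightarrow> C i = D i"
  shows "block_diag l n C = block_diag l n D"
proof -
  have "r div n < l" if "r < l*n" for r
    using that by (simp add: less_mult_imp_div_less)
  then show ?thesis
    unfolding block_diag_def using assms by (intro cong_mat refl) auto
qed

lemma block_block_diag:
  assumes "i < l" and "C i \<in> carrier_mat n n"
  shows "block n (block_diag l n C) i i = C i"
  using assms by (intro eq_matI) (auto simp: block_def block_diag_index)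

lemma mtrace_block_diag:
  assumes "\<And>i. i < l \<Longrightarrow> C i \<in> carrier_mat n n"
  shows "mtrace (block_diag l n C) = (\<Sum>i<l. mtrace (C i))"
proof -
  have "mtrace (block_diag l n C) = (\<Sum>i<l. mtrace (block n (block_diag l n C) i i))"
    by (rule mtrace_eq_sum_mtrace_blocks) (simp add: block_diag_def)
  also have "\<dots> = (\<Sum>i<l. mtrace (C i))"
    using assms by (intro sum.cong refl) (simp add: block_block_diag)
  finally show ?thesis .
qed

lemma psd_block_diag:
  assumes "\<And>i. i < l \<Longrightarrow> psd n (C i)"
  shows "psd (l*n) (block_diag l n C)"
  unfolding psd_def
proof (intro conjI allI)
  show "block_diag l n C \<in> carrier_mat (l*n) (l*n)" by (simp add: block_diag_def)
  fix v :: "nat \<Rightarrow> complex"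
  have "(\<Sum>p<l*n. \<Sum>q<l*n. cnj (v p) * block_diag l n C $$ (p,q) * v q) =
      (\<Sum>i<l. \<Sum>r<n. \<Sum>j<l. \<Sum>c<n. cnj (v (i*n + r)) * block_diag l n C $$ (i*n + r, j*n + c) * v (j*n + c))"
    by (simp add: sum_lessThan_mult_blocks)
  also have "\<dots> = (\<Sum>i<l. \<Sum>r<n. \<Sum>c<n. cnj (v (i*n + r)) * C i $$ (r,c) * v (i*n + c))"
  proof (rule sum.cong[OF refl], rule sum.cong[OF refl])
    fix i r assume "i \<in> {..<l}" "r \<in> {..<n}"
    have "(\<Sum>j<l. \<Sum>c<n. cnj (v (i*n + r)) * block_diag l n C $$ (i*n + r, j*n + c) * v (j*n + c)) =
        (\<Sum>c<n. \<Sum>j<l. if i = j then cnj (v (i*n + r)) * C i $$ (r,c) * v (i*n + c) else 0)"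
      using \<open>i \<in> {..<l}\<close> \<open>r \<in> {..<n}\<close>
      by (subst sum.swap) (auto intro!: sum.cong simp: block_diag_index)
    also have "\<dots> = (\<Sum>c<n. cnj (v (i*n + r)) * C i $$ (r,c) * v (i*n + c))"
      using \<open>i \<in> {..<l}\<close> by simp
    finally show "(\<Sum>j<l. \<Sum>c<n. cnj (v (i*n + r)) * block_diag l n C $$ (i*n + r, j*n + c) * v (j*n + c)) =
        (\<Sum>c<n. cnj (v (i*n + r)) * C i $$ (r,c) * v (i*n + c))" .
  qed
  also have "\<dots> \<ge> 0"
    using assms by (intro sum_nonneg psd_quadratic_form_nonneg) simp
  finally show "0 \<le> (\<Sum>p<l*n. \<Sum>q<l*n. cnj (v p) * block_diag l n C $$ (p,q) * v q)" .
qed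

lemma pinching_munit_index:
  assumes "a < l" "b < l"
  shows "pinching l (munit l i j) $$ (a,b) = (if i = a then if j = b then of_bool (a = b) else 0 else 0)"
  using assms by (auto simp: pinching_def munit_def)

lemma tensor_map_pinching:
  "tensor_map l l n k (pinching l) Psi X = block_diag l k (\<lambda>i. Psi (block n X i i))"
proof (rule eq_matI)
  fix r c assume "r < dim_row (block_diag l k (\<lambda>i. Psi (block n X i i)))"
    and "c < dim_col (block_diag l k (\<lambda>i. Psi (block n X i i)))"
  then have rc: "r < l*k" "c < l*k" by (auto simp: block_diag_def)
  define a b where "a = r div k" and "b = c div k"
  have ab: "a < l" "b < l" using rc by (simp_all add: a_def b_def less_mult_imp_div_less)
  let ?P = "\<lambda>i j. Psi (block n X i j) $$ (r mod k, c mod k)"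
  have "(\<Sum>i<l. \<Sum>j<l. pinching l (munit l i j) $$ (a,b) * ?P i j) =
      (\<Sum>i<l. if i = a then \<Sum>j<l. if j = b then of_bool (a = b) * ?P i j else 0 else 0)"
    using ab by (intro sum.cong refl) (simp add: pinching_munit_index if_distrib[of "\<lambda>x. x * _"] cong: if_cong)
  also have "\<dots> = of_bool (a = b) * ?P a b"
    using ab by simp
  finally show "tensor_map l l n k (pinching l) Psi X $$ (r,c) =
      block_diag l k (\<lambda>i. Psi (block n X i i)) $$ (r,c)"
    using rc by (simp add: tensor_map_def block_diag_def a_def b_def)
qed (simp_all add: tensor_map_def block_diag_def)

lemma mtrace_nonneg_if_psd: "psd n A \<Longrightarrow> mtrace A \<ge> 0"
  unfolding mtrace_def using psd_carrier[of n A]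
  by (auto intro!: sum_nonneg psd_diag_nonneg)

lemma smult_block_diag_density_mats:
  assumes "a \<in> simplex l" and "\<And>i. i < l \<Longrightarrow> Y i \<in> density_mats n"
  shows "block_diag l n (\<lambda>i. complex_of_real (a i) \<cdot>\<^sub>m Y i) \<in> density_mats (l*n)"
proof -
  have psd: "psd n (Y i)" and tr: "mtrace (Y i) = 1" and dim: "Y i \<in> carrier_mat n n" if "i < l" for i
    using assms(2)[OF that] by (auto simp: density_mats_def density_mats_carrier)
  have "mtrace (block_diag l n (\<lambda>i. complex_of_real (a i) \<cdot>\<^sub>m Y i)) =
      (\<Sum>i<l. mtrace (complex_of_real (a i) \<cdot>\<^sub>m Y i))"
    using dim by (simp add: mtrace_block_diag)
  also have "\<dots> = (\<Sum>i<l. complex_of_real (a i))"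
    by (intro sum.cong refl) (simp add: mtrace_smult[OF dim] tr)
  also have "\<dots> = 1"
    using assms(1) by (simp add: simplex_def flip: of_real_sum)
  finally show ?thesis
    using assms(1) unfolding density_mats_def
    by (auto simp: simplex_def less_eq_complex_def intro!: psd_block_diag psd_smult psd)
qed

lemma density_mats_diagonal_blocks:
  assumes X: "X \<in> density_mats (l*n)"
  obtains a Y where "a \<in> simplex l" and "\<And>i. i < l \<Longrightarrow> Y i \<in> density_mats n"
    and "\<And>i. i < l \<Longrightarrow> block n X i i = complex_of_real (a i) \<cdot>\<^sub>m Y i"
proof -
  have psd: "psd (l*n) X" and "mtrace X = 1" using X by (auto simp: density_mats_def)
  define a where "a i = Re (mtrace (block n X i i))" for i
  have tr: "mtrace (block n X i i) = complex_of_real (a i)" and a_nonneg: "a i \<ge> 0" if "i < l" for i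
    using mtrace_nonneg_if_psd[OF psd_block[OF psd that]]
    by (auto simp: a_def complex_eq_iff less_eq_complex_def)
  have "(\<Sum>i<l. a i) = 1"
    using \<open>mtrace X = 1\<close> mtrace_eq_sum_mtrace_blocks[OF psd_carrier[OF psd]]
    by (simp add: a_def flip: Re_sum)
  then have a: "a \<in> simplex l" using a_nonneg by (simp add: simplex_def)
  then obtain j where j: "j < l" "a j > 0"
    using a_nonneg by (metis \<open>sum a {..<l} = 1\<close> lessThan_iff less_eq_real_def sum.neutral zero_neq_one)
  have normalized: "complex_of_real (1 / a i) \<cdot>\<^sub>m block n X i i \<in> density_mats n" if "i < l" "a i > 0" for i
    using that tr[OF that(1)] psd_block[OF psd that(1)]
    by (auto simp: density_mats_def mtrace_smult[OF block_carrier] less_eq_complex_def intro!: psd_smult)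
  \<comment> \<open>a block of weight 0 is the zero matrix, so any density matrix may stand in for it\<close>
  define Y where "Y i = complex_of_real (1 / a (if a i > 0 then i else j)) \<cdot>\<^sub>m
      block n X (if a i > 0 then i else j) (if a i > 0 then i else j)" for i
  have "block n X i i = complex_of_real (a i) \<cdot>\<^sub>m Y i" if "i < l" for i
  proof (cases "a i > 0")
    case True
    then show ?thesis by (intro eq_matI) (auto simp: Y_def block_def)
  next
    case False
    then have "a i = 0" using a_nonneg[OF \<open>i < l\<close>] by simp
    then have "block n X i i = 0\<^sub>m n n"
      using tr[OF that] by (intro psd_eq_0_if_mtrace_eq_0 psd_block[OF psd that]) simp
    then show ?thesis using \<open>a i = 0\<close> by (auto simp: Y_def block_def)
  qed
  moreover have "Y i \<in> density_mats n" if "i < l" for i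
    using normalized j that by (simp add: Y_def)
  ultimately show ?thesis using a that by blast
qed

lemma tensor_map_pinching_smult_blocks:
  assumes "quantum_channel n k Psi"
    and "\<And>i. i < l \<Longrightarrow> Y i \<in> carrier_mat n n"
    and "\<And>i. i < l \<Longrightarrow> block n X i i = c i \<cdot>\<^sub>m Y i"
  shows "tensor_map l l n k (pinching l) Psi X = block_diag l k (\<lambda>i. c i \<cdot>\<^sub>m Psi (Y i))"
  unfolding tensor_map_pinching using assms
  by (intro block_diag_cong) (simp add: quantum_channel_def linear_mat_map_def)

theorem proposition8p3:
  fixes l N k :: nat and Psi :: "complex mat \<Rightarrow> complex mat"
  assumes "quantum_channel N k Psi"
  shows "tensor_map l l N k (pinching l) Psi ` density_mats (l*N) =
    {block_diag l k (\<lambda>i. complex_of_real (a i) \<cdot>\<^sub>m B i) | a B.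
       a \<in> simplex l \<and> (\<forall>i<l. B i \<in> Psi ` density_mats N)}"
proof (intro equalityI subsetI)
  fix Z assume "Z \<in> tensor_map l l N k (pinching l) Psi ` density_mats (l*N)"
  then obtain X where X: "X \<in> density_mats (l*N)" and Z: "Z = tensor_map l l N k (pinching l) Psi X"
    by blast
  obtain a Y where "a \<in> simplex l" and Y: "\<And>i. i < l \<Longrightarrow> Y i \<in> density_mats N"
    and "\<And>i. i < l \<Longrightarrow> block N X i i = complex_of_real (a i) \<cdot>\<^sub>m Y i"
    using density_mats_diagonal_blocks[OF X] by blast
  moreover from this have "Z = block_diag l k (\<lambda>i. complex_of_real (a i) \<cdot>\<^sub>m Psi (Y i))"
    unfolding Z by (intro tensor_map_pinching_smult_blocks[OF assms]) (simp_all add: density_mats_carrier)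
  ultimately show "Z \<in> {block_diag l k (\<lambda>i. complex_of_real (a i) \<cdot>\<^sub>m B i) | a B.
     a \<in> simplex l \<and> (\<forall>i<l. B i \<in> Psi ` density_mats N)}"
    by (intro CollectI exI[of _ a] exI[of _ "\<lambda>i. Psi (Y i)"] conjI) auto
next
  fix Z assume "Z \<in> {block_diag l k (\<lambda>i. complex_of_real (a i) \<cdot>\<^sub>m B i) | a B.
     a \<in> simplex l \<and> (\<forall>i<l. B i \<in> Psi ` density_mats N)}"
  then obtain a B where a: "a \<in> simplex l" and "\<forall>i<l. B i \<in> Psi ` density_mats N"
    and Z: "Z = block_diag l k (\<lambda>i. complex_of_real (a i) \<cdot>\<^sub>m B i)"
    by blast
  then have "\<forall>i<l. \<exists>Y. Y \<in> density_mats N \<and> B i = Psi Y"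
    by blast
  then obtain Y where Y: "\<And>i. i < l \<Longrightarrow> Y i \<in> density_mats N \<and> B i = Psi (Y i)"
    by metis
  define X where "X = block_diag l N (\<lambda>i. complex_of_real (a i) \<cdot>\<^sub>m Y i)"
  have "tensor_map l l N k (pinching l) Psi X =
      block_diag l k (\<lambda>i. complex_of_real (a i) \<cdot>\<^sub>m Psi (Y i))"
    unfolding X_def using Y
    by (intro tensor_map_pinching_smult_blocks[OF assms]) (simp_all add: block_block_diag density_mats_carrier)
  also have "\<dots> = Z"
    unfolding Z using Y by (intro block_diag_cong) simp
  finally have "tensor_map l l N k (pinching l) Psi X = Z" .
  moreover have "X \<in> density_mats (l*N)"
    unfolding X_def using a Y by (intro smult_block_diag_density_mats) simp_all
  ultimately show "Z \<in> tensor_map l l N k (pinching l) Psi ` density_mats (l*N)"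
    by blast
qed

end
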